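(* Let $X, Y, Z$ be Polish spaces and let $P: X \rightsquigarrow Y$ be a tight Feller kernel such that each $P(x,\cdot)$ has a continuous density $\rho_x$ with respect to a fixed reference Borel measure on $Y$. Let $R \subseteq X \times Z$ and $S \subseteq Y \times Z$ be closed, and define $P^{\dagger,\delta} S = \{(x,z) \in X \times Z : \mathrm{supp}_\delta(P(x)) \subseteq S_z\}$. If $0 < \delta \le \epsilon < 1$, then $$P_!^\epsilon(R \cap P^{\dagger,\delta} S) \subseteq P_!^\epsilon R \cap S.$$
   Context: Feller: $x \mapsto \int\phi\,dP(x,\cdot)$ continuous for bounded continuous $\phi$; tight: for each compact $K \subseteq X$, $\eta>0$ there is compact $L$ with $P(x,L) \ge 1-\eta$ for $x \in K$. $S_z = \{y : (y,z) \in S\}$. The $\epsilon$-highest density region is $\mathrm{supp}_\epsilon(P(x)) = \{y : \rho_x(y) \ge \lambda_\epsilon\}$ with $\lambda_\epsilon = \sup\{\lambda \ge 0 : P(x, \{y : \rho_x(y) \ge \lambda\}) \ge 1-\epsilon\}$. The $\epsilon$-pushforward is $P_!^\epsilon T = \overline{\bigcup_{(x,z) \in T} \mathrm{supp}_\epsilon(P(x)) \times \{z\}}$ (closure in $Y \times Z$). *)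

theory Defs
  imports "HOL-Probability.Probability"
begin

definition feller :: "('x::topological_space \<Rightarrow> 'y::topological_space measure) \<Rightarrow> bool" where
  "feller P \<longleftrightarrow> (\<forall>\<phi> :: 'y \<Rightarrow> real. continuous_on UNIV \<phi> \<and> bounded (range \<phi>) \<longrightarrow>
      continuous_on UNIV (\<lambda>x. integral\<^sup>L (P x) \<phi>))"

definition tight_kernel :: "('x::topological_space \<Rightarrow> 'y::topological_space measure) \<Rightarrow> bool" where
  "tight_kernel P \<longleftrightarrow> (\<forall>K. compact K \<longrightarrow> (\<forall>\<eta>>0. \<exists>L. compact L \<and>
      (\<forall>x\<in>K. measure (P x) L \<ge> 1 - \<eta>)))"

definition hdr_level :: "('x \<Rightarrow> 'y measure) \<Rightarrow> ('x \<Rightarrow> 'y \<Rightarrow> real) \<Rightarrow> real \<Rightarrow> 'x \<Rightarrow> real" where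
  "hdr_level P \<rho> \<epsilon> x = Sup {l. l \<ge> 0 \<and> measure (P x) {y. \<rho> x y \<ge> l} \<ge> 1 - \<epsilon>}"

definition hdr :: "('x \<Rightarrow> 'y measure) \<Rightarrow> ('x \<Rightarrow> 'y \<Rightarrow> real) \<Rightarrow> real \<Rightarrow> 'x \<Rightarrow> 'y set" where
  "hdr P \<rho> \<epsilon> x = {y. \<rho> x y \<ge> hdr_level P \<rho> \<epsilon> x}"

definition pushforward :: "('x \<Rightarrow> 'y measure) \<Rightarrow> ('x \<Rightarrow> 'y \<Rightarrow> real) \<Rightarrow> real \<Rightarrow>
    ('x \<times> 'z) set \<Rightarrow> ('y::topological_space \<times> 'z::topological_space) set" where
  "pushforward P \<rho> \<epsilon> T = closure (\<Union>(x, z)\<in>T. hdr P \<rho> \<epsilon> x \<times> {z})"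

definition dagger :: "('x \<Rightarrow> 'y measure) \<Rightarrow> ('x \<Rightarrow> 'y \<Rightarrow> real) \<Rightarrow> real \<Rightarrow>
    ('y \<times> 'z) set \<Rightarrow> ('x \<times> 'z) set" where
  "dagger P \<rho> \<delta> S = {(x, z). hdr P \<rho> \<delta> x \<subseteq> {y. (y, z) \<in> S}}"

end

theory Submission
  imports Defs
begin

text \<open>Only monotonicity is at stake. A smaller tolerance \<open>\<delta> \<le> \<epsilon>\<close> admits fewer
  thresholds, so \<open>\<lambda>\<^sub>\<delta> \<le> \<lambda>\<^sub>\<epsilon>\<close> and \<open>supp\<^sub>\<epsilon> \<subseteq> supp\<^sub>\<delta>\<close>; the set of thresholds is bounded
  because the superlevel sets of a real function have measures tending to 0. Hence every
  generator \<open>supp\<^sub>\<epsilon>(P x) \<times> {z}\<close> of the left-hand side lies in \<open>S\<close> when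
  \<open>supp\<^sub>\<delta>(P x) \<subseteq> S\<^sub>z\<close>, and closedness of \<open>S\<close> passes to the closure.\<close>

lemma bdd_above_superlevel_thresholds:
  fixes f :: "'a \<Rightarrow> real"
  assumes "finite_measure M" and f: "f \<in> borel_measurable M" and "0 < c"
  shows "bdd_above {l. l \<ge> 0 \<and> measure M {y \<in> space M. l \<le> f y} \<ge> c}"
proof -
  interpret finite_measure M by fact
  define A where "A n = {y \<in> space M. real n \<le> f y}" for n :: nat
  have A_sets: "range A \<subseteq> sets M"
    using f unfolding A_def by auto
  have "decseq A"
    unfolding A_def decseq_def by (auto intro: order_trans)
  moreover have "(\<Inter>n. A n) = {}"
  proof (rule equals0I)
    fix y
    assume y: "y \<in> (\<Inter>n. A n)"
    obtain n where "f y < real n"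
      using reals_Archimedean2 by blast
    moreover have "real n \<le> f y"
      using y unfolding A_def by blast
    ultimately show False
      by simp
  qed
  ultimately have "(\<lambda>n. measure M (A n)) \<longlonglongrightarrow> 0"
    using finite_Lim_measure_decseq[OF A_sets] by simp
  then have "\<forall>\<^sub>F n in sequentially. measure M (A n) < c"
    using \<open>0 < c\<close> by (rule order_tendstoD(2))
  then obtain n where n: "measure M (A n) < c"
    by (auto simp: eventually_sequentially)
  have "l \<le> real n" if "measure M {y \<in> space M. l \<le> f y} \<ge> c" for l
  proof (rule ccontr)
    assume "\<not> l \<le> real n"
    then have "{y \<in> space M. l \<le> f y} \<subseteq> A n"
      unfolding A_def by auto
    then have "measure M {y \<in> space M. l \<le> f y} \<le> measure M (A n)"
      using A_sets by (intro finite_measure_mono) auto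
    with that n show False by simp
  qed
  then show ?thesis
    unfolding bdd_above_def by blast
qed

lemma hdr_level_antimono:
  fixes P :: "'x \<Rightarrow> 'y::topological_space measure"
  assumes "prob_space (P x)" and sets_P: "sets (P x) = sets borel"
    and "continuous_on UNIV (\<rho> x)" and "\<And>y. \<rho> x y \<ge> 0"
    and "0 \<le> \<delta>" and "\<delta> \<le> \<epsilon>" and "\<epsilon> < 1"
  shows "hdr_level P \<rho> \<delta> x \<le> hdr_level P \<rho> \<epsilon> x"
proof -
  interpret prob_space "P x" by fact
  have space_P: "space (P x) = UNIV"
    using sets_eq_imp_space_eq[OF sets_P] by simp
  have "\<rho> x \<in> borel_measurable (P x)"
    using measurable_cong_sets[OF sets_P refl] borel_measurable_continuous_onI assms(3) by blast
  then have "bdd_above {l. l \<ge> 0 \<and> measure (P x) {y. \<rho> x y \<ge> l} \<ge> 1 - \<epsilon>}"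
    using bdd_above_superlevel_thresholds[of "P x" "\<rho> x" "1 - \<epsilon>"] \<open>\<epsilon> < 1\<close> space_P
    by (simp add: finite_measure_axioms)
  moreover have "0 \<in> {l. l \<ge> 0 \<and> measure (P x) {y. \<rho> x y \<ge> l} \<ge> 1 - \<delta>}"
    using assms(4,5) space_P prob_space by simp
  ultimately show ?thesis
    unfolding hdr_level_def using \<open>\<delta> \<le> \<epsilon>\<close> by (intro cSup_subset_mono) auto
qed

lemma hdr_antimono:
  "hdr_level P \<rho> \<delta> x \<le> hdr_level P \<rho> \<epsilon> x \<Longrightarrow> hdr P \<rho> \<epsilon> x \<subseteq> hdr P \<rho> \<delta> x"
  unfolding hdr_def by auto

lemma pushforward_mono: "T \<subseteq> T' \<Longrightarrow> pushforward P \<rho> \<epsilon> T \<subseteq> pushforward P \<rho> \<epsilon> T'"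
  unfolding pushforward_def by (intro closure_mono) blast

lemma pushforward_dagger_subset:
  assumes "\<And>x. hdr P \<rho> \<epsilon> x \<subseteq> hdr P \<rho> \<delta> x" and "closed S"
  shows "pushforward P \<rho> \<epsilon> (dagger P \<rho> \<delta> S) \<subseteq> S"
  unfolding pushforward_def
  using assms by (intro closure_minimal) (fastforce simp: dagger_def)+

theorem mainTheorem17:
  fixes P :: "'x::polish_space \<Rightarrow> 'y::polish_space measure"
    and \<mu> :: "'y measure"
    and \<rho> :: "'x \<Rightarrow> 'y \<Rightarrow> real"
    and R :: "('x \<times> 'z::polish_space) set"
    and S :: "('y \<times> 'z) set"
    and \<delta> \<epsilon> :: real
  assumes ref_borel: "sets \<mu> = sets borel"
    and prob: "\<And>x. prob_space (P x)"
    and dens_nonneg: "\<And>x y. \<rho> x y \<ge> 0"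
    and dens_cont: "\<And>x. continuous_on UNIV (\<rho> x)"
    and dens: "\<And>x. P x = density \<mu> (\<lambda>y. ennreal (\<rho> x y))"
    and feller: "feller P"
    and tight: "tight_kernel P"
    and R_closed: "closed R"
    and S_closed: "closed S"
    and \<delta>_pos: "0 < \<delta>" and \<delta>_le: "\<delta> \<le> \<epsilon>" and \<epsilon>_lt: "\<epsilon> < 1"
  shows "pushforward P \<rho> \<epsilon> (R \<inter> dagger P \<rho> \<delta> S) \<subseteq> pushforward P \<rho> \<epsilon> R \<inter> S"
proof -
  have "sets (P x) = sets borel" for x
    using dens[of x] ref_borel by simp
  then have "hdr P \<rho> \<epsilon> x \<subseteq> hdr P \<rho> \<delta> x" for x
    using \<delta>_pos \<delta>_le \<epsilon>_lt
    by (intro hdr_antimono hdr_level_antimono[where P = P and \<rho> = \<rho> and x = x,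
        OF prob _ dens_cont dens_nonneg]) simp_all
  then have "pushforward P \<rho> \<epsilon> (dagger P \<rho> \<delta> S) \<subseteq> S"
    using S_closed by (rule pushforward_dagger_subset)
  then show ?thesis
    using pushforward_mono[of "R \<inter> dagger P \<rho> \<delta> S"] by blast
qed

end
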